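(* Let $q\ge2$ be an integer, $[q]=\{0,\dots,q-1\}$, and let $X_{\mathrm{rep}}=\{(\dots,a,a,a,\dots): a\in[q]\}\subseteq[q]^{\mathbb{Z}}$ be the $q$-ary repetition system. Let $\mu^{\mathsf{u}}$ be the uniform Bernoulli i.i.d. measure on $[q]^{\mathbb{Z}}$. Then \[R_0(X_{\mathrm{rep}},[q]^{\mathbb{Z}},\mu^{\mathsf{u}})=R(X_{\mathrm{rep}},[q]^{\mathbb{Z}})=1-\frac1q.\]
   Context: For a shift space $X\subseteq\Sigma^{\mathbb{Z}}$, $\mathscr{B}_n(X)$ is the set of length-$n$ words appearing as consecutive subwords of elements of $X$ (so $\mathscr{B}_n([q]^{\mathbb{Z}})=[q]^n$). $d$ is the Hamming distance and $B_r(\overline{x})$ the Hamming ball of radius $r$. For $A,C\subseteq\Sigma^n$: $R(C,A)=\max_{\overline{y}\in A}\min_{\overline{x}\in C}d(\overline{x},\overline{y})$, and for a probability measure $\eta$ on $\Sigma^n$ and $\varepsilon>0$, $R_\varepsilon(C,A,\eta)=\min\{r\in\mathbb{Z}_{\ge0}:\eta(A\cap\bigcup_{\overline{x}\in C}B_r(\overline{x}))\ge1-\varepsilon\}$. For shift spaces $X,Y$: $R(X,Y)=\liminf_n\frac1nR(\mathscr{B}_n(X),\mathscr{B}_n(Y))$. For a shift-invariant ergodic probability measure $\mu$ on $Y$, with $\mu_n$ its marginal on coordinates $0,\dots,n-1$: $R_\varepsilon(X,Y,\mu)=\liminf_n\frac1nR_\varepsilon(\mathscr{B}_n(X),\mathscr{B}_n(Y),\mu_n)$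 and the essential covering radius is $R_0(X,Y,\mu)=\lim_{\varepsilon\to0}R_\varepsilon(X,Y,\mu)$. *)

theory Defs
  imports "HOL-Probability.Probability"
begin

definition hamming :: "'a list \<Rightarrow> 'a list \<Rightarrow> nat" where
  "hamming x y = card {i. i < length x \<and> x ! i \<noteq> y ! i}"

definition hball :: "'a list \<Rightarrow> nat \<Rightarrow> 'a list set" where
  "hball x r = {y. length y = length x \<and> hamming x y \<le> r}"

definition blocks :: "nat \<Rightarrow> (int \<Rightarrow> 'a) set \<Rightarrow> 'a list set" where
  "blocks n X = {map (\<lambda>k. x (i + int k)) [0..<n] | x i. x \<in> X}"

definition cov_radius :: "'a list set \<Rightarrow> 'a list set \<Rightarrow> nat" where
  "cov_radius C A = Max ((\<lambda>y. Min ((\<lambda>x. hamming x y) ` C)) ` A)"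

definition cov_radius_eps :: "'a list set \<Rightarrow> 'a list set \<Rightarrow> 'a list pmf \<Rightarrow> real \<Rightarrow> nat" where
  "cov_radius_eps C A \<eta> \<epsilon> =
     (LEAST r::nat. measure_pmf.prob \<eta> (A \<inter> (\<Union>x\<in>C. hball x r)) \<ge> 1 - \<epsilon>)"

definition shift_cov_radius :: "(int \<Rightarrow> 'a) set \<Rightarrow> (int \<Rightarrow> 'a) set \<Rightarrow> ereal" where
  "shift_cov_radius X Y =
     liminf (\<lambda>n. ereal (real (cov_radius (blocks n X) (blocks n Y)) / real n))"

text \<open>R_eps(X,Y,mu), where mu is given through its family of marginals
  \<open>\<mu> n\<close> on the coordinates 0,...,n-1.\<close>
definition shift_cov_radius_eps ::
  "(int \<Rightarrow> 'a) set \<Rightarrow> (int \<Rightarrow> 'a) set \<Rightarrow> (nat \<Rightarrow> 'a list pmf) \<Rightarrow> real \<Rightarrow> ereal" where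
  "shift_cov_radius_eps X Y \<mu> \<epsilon> =
     liminf (\<lambda>n. ereal (real (cov_radius_eps (blocks n X) (blocks n Y) (\<mu> n) \<epsilon>) / real n))"

definition full_shift :: "nat \<Rightarrow> (int \<Rightarrow> nat) set" where
  "full_shift q = {x. \<forall>i. x i < q}"

definition rep_system :: "nat \<Rightarrow> (int \<Rightarrow> nat) set" where
  "rep_system q = {(\<lambda>_. a) | a. a < q}"

definition unif_bernoulli_marginal :: "nat \<Rightarrow> nat \<Rightarrow> nat list pmf" where
  "unif_bernoulli_marginal q n = pmf_of_set {w. length w = n \<and> set w \<subseteq> {0..<q}}"

end

theory Submission
  imports Defs
begin

text \<open>A word \<open>y \<in> [q]\<^sup>n\<close> is at Hamming distance \<open>n - max\<^sub>a #\<^sub>a(y)\<close> from the repetition code,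
  where \<open>#\<^sub>a(y)\<close> counts the occurrences of the letter \<open>a\<close>. Some letter occurs at least \<open>n/q\<close>
  times, while in the periodic word \<open>0 1 \<dots> (q-1) 0 1 \<dots>\<close> every letter occurs at most
  \<open>\<lfloor>n/q\<rfloor> + 1\<close> times; hence the covering radius is \<open>n(1 - 1/q) + O(1)\<close>.
  Under the uniform measure \<open>#\<^sub>a\<close> has mean \<open>n/q\<close> and variance \<open>n(q-1)/q\<^sup>2\<close>, so by Chebyshev
  the words in which some letter occurs \<open>n/q + \<delta>n\<close> times have probability at most
  \<open>1/(\<delta>\<^sup>2n)\<close>. A radius below \<open>n(1 - 1/q - \<delta>)\<close> covers only such words, so for every
  \<open>0 < \<epsilon> < 1\<close> the \<open>\<epsilon>\<close>-essential radius is \<open>n(1 - 1/q) + o(n)\<close> as well.\<close>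

definition words :: "'a set \<Rightarrow> nat \<Rightarrow> 'a list set" where
  "words A n = {w. length w = n \<and> set w \<subseteq> A}"

lemma finite_words: "finite A \<Longrightarrow> finite (words A n)"
  unfolding words_def using finite_lists_length_eq[of A n] by (simp add: conj_commute)

lemma card_words: "finite A \<Longrightarrow> card (words A n) = card A ^ n"
  unfolding words_def using card_lists_length_eq[of A n] by (simp add: conj_commute)

lemma words_nonempty: "A \<noteq> {} \<Longrightarrow> words A n \<noteq> {}"
  unfolding words_def by (auto intro!: exI[of _ "replicate n (SOME a. a \<in> A)"] some_in_eq[THEN iffD2])

lemma sum_words_Suc:
  assumes "finite A"
  shows "(\<Sum>w\<in>words A (Suc n). f w) = (\<Sum>w\<in>words A n. \<Sum>x\<in>A. f (x # w))"
proof -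
  have "words A (Suc n) = (\<lambda>(w, x). x # w) ` (words A n \<times> A)"
    unfolding words_def by (auto simp: length_Suc_conv)
  moreover have "inj_on (\<lambda>(w, x). x # w) (words A n \<times> A)"
    by (auto simp: inj_on_def)
  ultimately have "(\<Sum>w\<in>words A (Suc n). f w) = (\<Sum>(w, x)\<in>words A n \<times> A. f (x # w))"
    by (simp add: sum.reindex case_prod_unfold)
  then show ?thesis
    by (simp add: sum.cartesian_product)
qed

lemma sum_count_list_deviation_sq:
  assumes "finite A" "a \<in> A"
  defines "k \<equiv> real (card A)"
  shows "(\<Sum>w\<in>words A n. (real (count_list w a) - real n / k)\<^sup>2) = k ^ n * real n * (k - 1) / k\<^sup>2"
proof (induction n)
  case 0
  then show ?case
    by (simp add: words_def)
next
  case (Suc n)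
  have k: "k > 0"
    using assms card_gt_0_iff unfolding k_def by fastforce
  have letter_sum: "(\<Sum>x\<in>A. (c + (if x = a then 1 else 0))\<^sup>2) = k * c\<^sup>2 + 2 * c + 1" for c :: real
  proof -
    have "(c + (if x = a then 1 else 0))\<^sup>2 = c\<^sup>2 + (if x = a then 2 * c + 1 else 0)" for x
      by (simp add: power2_eq_square algebra_simps)
    then show ?thesis
      using assms by (simp add: sum.distrib k_def)
  qed
  have "(\<Sum>w\<in>words A (Suc n). (real (count_list w a) - real (Suc n) / k)\<^sup>2)
      = (\<Sum>w\<in>words A n. \<Sum>x\<in>A. ((real (count_list w a) - real n / k - 1 / k) + (if x = a then 1 else 0))\<^sup>2)"
    using assms(1) by (simp add: sum_words_Suc) (auto intro!: sum.cong simp: add_divide_distrib algebra_simps)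
  also have "\<dots> = (\<Sum>w\<in>words A n. k * (real (count_list w a) - real n / k)\<^sup>2 + (1 - 1 / k))"
  proof (intro sum.cong refl)
    fix w
    define f where "f = real (count_list w a) - real n / k"
    have "k * (f - 1 / k)\<^sup>2 + 2 * (f - 1 / k) + 1 = k * f\<^sup>2 + (1 - 1 / k)"
      using k by (simp add: power2_diff field_simps power2_eq_square)
    then show "(\<Sum>x\<in>A. (f - 1 / k + (if x = a then 1 else 0))\<^sup>2) = k * f\<^sup>2 + (1 - 1 / k)"
      by (simp only: letter_sum)
  qed
  also have "\<dots> = k * (\<Sum>w\<in>words A n. (real (count_list w a) - real n / k)\<^sup>2) + k ^ n * (1 - 1 / k)"
    using assms(1) by (simp add: sum.distrib sum_distrib_left card_words k_def)
  also have "\<dots> = k ^ Suc n * real (Suc n) * (k - 1) / k\<^sup>2"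
    unfolding Suc.IH using k by (simp add: field_simps power2_eq_square)
  finally show ?case .
qed

lemma card_count_list_ge_deviation:
  assumes "finite A" "a \<in> A" "t > 0"
  defines "k \<equiv> real (card A)"
  shows "real (card {w\<in>words A n. real n / k + t \<le> count_list w a}) * t\<^sup>2
           \<le> k ^ n * real n * (k - 1) / k\<^sup>2"
proof -
  let ?S = "{w\<in>words A n. real n / k + t \<le> count_list w a}"
  have "real (card ?S) * t\<^sup>2 = (\<Sum>w\<in>?S. t\<^sup>2)"
    by simp
  also have "\<dots> \<le> (\<Sum>w\<in>?S. (real (count_list w a) - real n / k)\<^sup>2)"
    using assms(3) by (intro sum_mono power_mono) auto
  also have "\<dots> \<le> (\<Sum>w\<in>words A n. (real (count_list w a) - real n / k)\<^sup>2)"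
    using assms(1) by (intro sum_mono2 finite_words) auto
  finally show ?thesis
    using sum_count_list_deviation_sq[OF assms(1,2)] unfolding k_def by simp
qed

lemma prob_exists_count_list_ge_deviation:
  assumes "finite A" "A \<noteq> {}" "t > 0"
  shows "measure_pmf.prob (pmf_of_set (words A n)) {w. \<exists>a\<in>A. real n / card A + t \<le> count_list w a}
           \<le> real n / t\<^sup>2"
proof -
  define k where "k = real (card A)"
  let ?S = "\<lambda>a. {w\<in>words A n. real n / k + t \<le> count_list w a}"
  have k: "k > 0"
    using assms card_gt_0_iff unfolding k_def by fastforce
  have "real (card (\<Union>a\<in>A. ?S a)) \<le> (\<Sum>a\<in>A. real (card (?S a)))"
    using card_UN_le[OF assms(1), of ?S] of_nat_mono by fastforce
  also have "\<dots> \<le> (\<Sum>a\<in>A. k ^ n * real n * (k - 1) / k\<^sup>2 / t\<^sup>2)"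
  proof (intro sum_mono)
    fix a assume "a \<in> A"
    then show "real (card (?S a)) \<le> k ^ n * real n * (k - 1) / k\<^sup>2 / t\<^sup>2"
      using card_count_list_ge_deviation[OF assms(1) _ assms(3)] assms(3)
      by (subst pos_le_divide_eq) (auto simp: k_def)
  qed
  also have "\<dots> \<le> k ^ n * (real n / t\<^sup>2)"
    using k assms(3) by (simp add: k_def[symmetric] field_simps power2_eq_square)
  finally have "real (card (\<Union>a\<in>A. ?S a)) / k ^ n \<le> real n / t\<^sup>2"
    using k by (simp add: field_simps)
  moreover have "words A n \<inter> {w. \<exists>a\<in>A. real n / k + t \<le> count_list w a} = (\<Union>a\<in>A. ?S a)"
    by blast
  ultimately show ?thesis
    using assms by (simp add: measure_pmf_of_set finite_words words_nonempty card_words k_def)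
qed

lemma exists_count_list_ge_average:
  assumes "finite A" "A \<noteq> {}" "set w \<subseteq> A"
  shows "\<exists>a\<in>A. real (length w) / card A \<le> count_list w a"
proof (rule ccontr)
  assume "\<not> ?thesis"
  then have "(\<Sum>a\<in>A. real (count_list w a)) < (\<Sum>a\<in>A. real (length w) / card A)"
    using assms by (intro sum_strict_mono) (auto simp: not_le)
  then show False
    using assms sum_count_set[OF assms(3,1)] by (simp flip: of_nat_sum)
qed

lemma count_list_map_mod_le:
  assumes "q > 0"
  shows "count_list (map (\<lambda>i. i mod q) [0..<n]) a \<le> n div q + 1"
proof -
  let ?S = "{i. i < n \<and> a = i mod q}"
  have "count_list (map (\<lambda>i. i mod q) [0..<n]) a = card ?S"
    unfolding count_list_eq_length_filter length_filter_conv_card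
    by (intro arg_cong[where f=card]) auto
  also have "card ?S \<le> card {0..n div q}"
  proof (rule card_inj_on_le)
    show "inj_on (\<lambda>i. i div q) ?S"
      by (auto simp: inj_on_def) (metis div_mult_mod_eq)
    show "(\<lambda>i. i div q) ` ?S \<subseteq> {0..n div q}"
      by (auto intro!: div_le_mono)
  qed simp
  finally show ?thesis
    by simp
qed

lemma hamming_replicate: "hamming (replicate (length y) a) y = length y - count_list y a"
proof -
  have "hamming (replicate (length y) a) y = length (filter (\<lambda>z. a \<noteq> z) y)"
    unfolding hamming_def length_filter_conv_card by (auto intro!: arg_cong[where f=card])
  then show ?thesis
    using sum_length_filter_compl[of "(=) a" y] by (simp add: count_list_eq_length_filter)
qed

lemma length_blocks: "w \<in> blocks n X \<Longrightarrow> length w = n"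
  unfolding blocks_def by auto

lemma subset_cover_cov_radius:
  assumes "finite C" "C \<noteq> {}" "finite A"
    and "\<forall>x\<in>C. length x = n" "\<forall>y\<in>A. length y = n"
  shows "A \<subseteq> (\<Union>x\<in>C. hball x (cov_radius C A))"
proof
  fix y assume y: "y \<in> A"
  obtain x where x: "x \<in> C" "hamming x y = Min ((\<lambda>x. hamming x y) ` C)"
    using Min_in[of "(\<lambda>x. hamming x y) ` C"] assms(1,2) by fastforce
  have "hamming x y \<le> cov_radius C A"
    unfolding cov_radius_def x(2) using y assms(3) by (intro Max_ge) auto
  then show "y \<in> (\<Union>x\<in>C. hball x (cov_radius C A))"
    using x(1) y assms(4,5) unfolding hball_def by fastforce
qed

lemma prob_cover_cov_radius:
  assumes "finite C" "C \<noteq> {}" "finite A"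
    and "\<forall>x\<in>C. length x = n" "\<forall>y\<in>A. length y = n"
    and "set_pmf \<eta> \<subseteq> A"
  shows "measure_pmf.prob \<eta> (A \<inter> (\<Union>x\<in>C. hball x (cov_radius C A))) = 1"
  using subset_cover_cov_radius[OF assms(1-5)] assms(6)
  by (simp add: Int_absorb2 measure_pmf.prob_eq_1 AE_measure_pmf_iff subset_iff)

lemma cov_radius_eps_le:
  assumes "measure_pmf.prob \<eta> (A \<inter> (\<Union>x\<in>C. hball x r)) \<ge> 1 - \<epsilon>"
  shows "cov_radius_eps C A \<eta> \<epsilon> \<le> r"
  unfolding cov_radius_eps_def using assms by (rule Least_le)

lemma prob_cover_cov_radius_eps:
  assumes "measure_pmf.prob \<eta> (A \<inter> (\<Union>x\<in>C. hball x r)) \<ge> 1 - \<epsilon>"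
  shows "measure_pmf.prob \<eta> (A \<inter> (\<Union>x\<in>C. hball x (cov_radius_eps C A \<eta> \<epsilon>))) \<ge> 1 - \<epsilon>"
  unfolding cov_radius_eps_def using assms by (rule LeastI)

lemma blocks_rep_system: "blocks n (rep_system q) = (\<lambda>a. replicate n a) ` {0..<q}"
proof
  show "blocks n (rep_system q) \<subseteq> (\<lambda>a. replicate n a) ` {0..<q}"
    unfolding blocks_def rep_system_def by (auto simp: map_replicate_const)
  show "(\<lambda>a. replicate n a) ` {0..<q} \<subseteq> blocks n (rep_system q)"
  proof
    fix w assume "w \<in> (\<lambda>a. replicate n a) ` {0..<q}"
    then obtain a where a: "a < q" "w = replicate n a"
      by auto
    have "(\<lambda>_::int. a) \<in> rep_system q"
      using a(1) unfolding rep_system_def by auto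
    moreover have "w = map (\<lambda>k. (\<lambda>_::int. a) (0 + int k)) [0..<n]"
      using a(2) by (simp add: map_replicate_const)
    ultimately show "w \<in> blocks n (rep_system q)"
      unfolding blocks_def by (intro CollectI exI conjI)
  qed
qed

lemma blocks_full_shift:
  assumes "q > 0"
  shows "blocks n (full_shift q) = words {0..<q} n"
proof
  show "blocks n (full_shift q) \<subseteq> words {0..<q} n"
    unfolding blocks_def full_shift_def words_def by auto
  show "words {0..<q} n \<subseteq> blocks n (full_shift q)"
  proof
    fix w assume w: "w \<in> words {0..<q} n"
    define x where "x = (\<lambda>i::int. if 0 \<le> i \<and> i < int n then w ! nat i else 0)"
    have "x \<in> full_shift q"
      using w assms unfolding full_shift_def x_def words_def by (auto simp: subset_iff)
    moreover have "w = map (\<lambda>k. x (0 + int k)) [0..<n]"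
      using w unfolding words_def x_def by (auto intro: nth_equalityI)
    ultimately show "w \<in> blocks n (full_shift q)"
      unfolding blocks_def by blast
  qed
qed

abbreviation rep_cov_radius :: "nat \<Rightarrow> nat \<Rightarrow> nat" where
  "rep_cov_radius q n \<equiv> cov_radius (blocks n (rep_system q)) (blocks n (full_shift q))"

abbreviation rep_cov_radius_eps :: "nat \<Rightarrow> real \<Rightarrow> nat \<Rightarrow> nat" where
  "rep_cov_radius_eps q \<epsilon> n \<equiv>
     cov_radius_eps (blocks n (rep_system q)) (blocks n (full_shift q)) (unif_bernoulli_marginal q n) \<epsilon>"

lemma hamming_rep_system_Min:
  assumes "length y = n" "q > 0"
  shows "Min ((\<lambda>x. hamming x y) ` blocks n (rep_system q)) = Min ((\<lambda>a. n - count_list y a) ` {0..<q})"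
  unfolding blocks_rep_system image_image using assms
  by (intro arg_cong[where f = Min] image_cong) (auto simp: hamming_replicate[of y, simplified assms(1)])

lemma rep_cov_radius_eq:
  assumes "q > 0"
  shows "rep_cov_radius q n = Max ((\<lambda>y. Min ((\<lambda>a. n - count_list y a) ` {0..<q})) ` words {0..<q} n)"
  unfolding cov_radius_def blocks_full_shift[OF assms]
  using hamming_rep_system_Min[OF _ assms] by (intro arg_cong[where f = Max] image_cong) (auto simp: words_def)

lemma rep_cov_radius_le:
  assumes "q > 0"
  shows "real (rep_cov_radius q n) \<le> real n - real n / q"
proof -
  have "real (Min ((\<lambda>a. n - count_list y a) ` {0..<q})) \<le> real n - real n / q"
    if y: "y \<in> words {0..<q} n" for y
  proof -
    obtain a where a: "a < q" "real n / q \<le> count_list y a"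
      using exists_count_list_ge_average[of "{0..<q}" y] y assms by (auto simp: words_def)
    have "Min ((\<lambda>a. n - count_list y a) ` {0..<q}) \<le> n - count_list y a"
      using a(1) by (intro Min_le) auto
    then show ?thesis
      using a(2) count_le_length[of y a] y by (auto simp: words_def of_nat_diff)
  qed
  moreover have "rep_cov_radius q n \<in> (\<lambda>y. Min ((\<lambda>a. n - count_list y a) ` {0..<q})) ` words {0..<q} n"
    unfolding rep_cov_radius_eq[OF assms] using assms
    by (intro Max_in finite_imageI finite_words) (auto simp: words_nonempty)
  ultimately show ?thesis
    by auto
qed

lemma rep_cov_radius_ge:
  assumes "q > 0"
  shows "real n - real n / q - 1 \<le> real (rep_cov_radius q n)"
proof -
  define y where "y = map (\<lambda>i. i mod q) [0..<n]"
  have y: "y \<in> words {0..<q} n"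
    unfolding y_def words_def using assms by auto
  obtain a where a: "a < q" "Min ((\<lambda>a. n - count_list y a) ` {0..<q}) = n - count_list y a"
    using Min_in[of "(\<lambda>a. n - count_list y a) ` {0..<q}"] assms by fastforce
  have "real (count_list y a) \<le> real (n div q) + 1"
    using count_list_map_mod_le[OF assms, of n a] unfolding y_def by linarith
  moreover have "real (n div q) \<le> real n / real q"
    by (rule of_nat_div_le_of_nat)
  ultimately have "real (count_list y a) \<le> real n / q + 1"
    by linarith
  then have "real n - real n / q - 1 \<le> real (Min ((\<lambda>a. n - count_list y a) ` {0..<q}))"
    unfolding a(2) using count_le_length[of y a] y by (simp add: words_def of_nat_diff)
  also have "Min ((\<lambda>a. n - count_list y a) ` {0..<q}) \<le> rep_cov_radius q n"
    unfolding rep_cov_radius_eq[OF assms] using y by (simp add: finite_words)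
  finally show ?thesis
    by simp
qed

lemma prob_cover_rep_cov_radius:
  assumes "q > 0"
  shows "measure_pmf.prob (unif_bernoulli_marginal q n)
           (blocks n (full_shift q) \<inter> (\<Union>x\<in>blocks n (rep_system q). hball x (rep_cov_radius q n))) = 1"
proof (rule prob_cover_cov_radius)
  show "set_pmf (unif_bernoulli_marginal q n) \<subseteq> blocks n (full_shift q)"
    using assms unfolding unif_bernoulli_marginal_def blocks_full_shift[OF assms]
    by (simp add: words_def[symmetric] finite_words words_nonempty)
  show "\<forall>x\<in>blocks n (rep_system q). length x = n" "\<forall>y\<in>blocks n (full_shift q). length y = n"
    by (auto dest: length_blocks)
qed (use assms in \<open>auto simp: blocks_rep_system blocks_full_shift finite_words\<close>)

lemma rep_cov_radius_eps_le:
  assumes "q > 0" "\<epsilon> \<ge> 0"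
  shows "rep_cov_radius_eps q \<epsilon> n \<le> rep_cov_radius q n"
  using prob_cover_rep_cov_radius[OF assms(1)] assms(2) by (intro cov_radius_eps_le) simp

lemma rep_cov_radius_eps_ge:
  assumes "q > 0" "\<epsilon> \<ge> 0" "\<delta> > 0" "n > 0" "1 / (\<delta>\<^sup>2 * real n) < 1 - \<epsilon>"
  shows "real n - real n / q - \<delta> * real n \<le> real (rep_cov_radius_eps q \<epsilon> n)"
proof (rule ccontr)
  let ?r = "rep_cov_radius_eps q \<epsilon> n"
  let ?B = "blocks n (full_shift q) \<inter> (\<Union>x\<in>blocks n (rep_system q). hball x ?r)"
  let ?T = "{w. \<exists>a\<in>{0..<q}. real n / card {0..<q} + \<delta> * real n \<le> count_list w a}"
  assume "\<not> ?thesis"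
  then have r: "real ?r < real n - real n / q - \<delta> * real n"
    by simp
  have "?B \<subseteq> ?T"
  proof
    fix y assume "y \<in> ?B"
    then obtain a where y: "y \<in> words {0..<q} n" "a < q" "y \<in> hball (replicate n a) ?r"
      unfolding blocks_full_shift[OF assms(1)] blocks_rep_system by auto
    then have "n - count_list y a \<le> ?r"
      unfolding hball_def using hamming_replicate[of y a] by (simp add: words_def)
    then show "y \<in> ?T"
      using y(2) r by (auto intro!: bexI[of _ a])
  qed
  then have "measure_pmf.prob (unif_bernoulli_marginal q n) ?B
      \<le> measure_pmf.prob (pmf_of_set (words {0..<q} n)) ?T"
    unfolding unif_bernoulli_marginal_def words_def[symmetric]
    by (intro measure_pmf.finite_measure_mono) simp_all
  also have "\<dots> \<le> real n / (\<delta> * real n)\<^sup>2"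
    using assms by (intro prob_exists_count_list_ge_deviation) auto
  also have "\<dots> = 1 / (\<delta>\<^sup>2 * real n)"
    by (simp add: power2_eq_square)
  also have "\<dots> < 1 - \<epsilon>"
    by (fact assms(5))
  also have "1 - \<epsilon> \<le> measure_pmf.prob (unif_bernoulli_marginal q n) ?B"
    using prob_cover_rep_cov_radius[OF assms(1)] assms(2)
    by (intro prob_cover_cov_radius_eps[where r = "rep_cov_radius q n"]) simp
  finally show False
    by simp
qed

lemma rep_cov_radius_ratio_tendsto:
  assumes "q > 0"
  shows "(\<lambda>n. real (rep_cov_radius q n) / real n) \<longlonglongrightarrow> 1 - 1 / real q"
proof (rule tendsto_sandwich[where f = "\<lambda>n. 1 - 1 / real q - 1 / real n" and h = "\<lambda>n. 1 - 1 / real q"])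
  show "\<forall>\<^sub>F n in sequentially. 1 - 1 / real q - 1 / real n \<le> real (rep_cov_radius q n) / real n"
    using eventually_gt_at_top[of 0]
  proof eventually_elim
    case (elim n)
    have "(real n - real n / q - 1) / real n \<le> real (rep_cov_radius q n) / real n"
      using rep_cov_radius_ge[OF assms, of n] by (intro divide_right_mono) auto
    then show ?case
      using elim by (simp add: field_simps)
  qed
  show "\<forall>\<^sub>F n in sequentially. real (rep_cov_radius q n) / real n \<le> 1 - 1 / real q"
    using eventually_gt_at_top[of 0]
  proof eventually_elim
    case (elim n)
    then show ?case
      using rep_cov_radius_le[OF assms, of n] by (simp add: field_simps)
  qed
  show "(\<lambda>n. 1 - 1 / real q - 1 / real n) \<longlonglongrightarrow> 1 - 1 / real q"
    by (auto intro!: tendsto_eq_intros lim_const_over_n)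
qed simp

lemma rep_cov_radius_eps_ratio_tendsto:
  assumes "q > 0" "0 \<le> \<epsilon>" "\<epsilon> < 1"
  shows "(\<lambda>n. real (rep_cov_radius_eps q \<epsilon> n) / real n) \<longlonglongrightarrow> 1 - 1 / real q"
proof (rule order_tendstoI)
  fix c assume c: "1 - 1 / real q < c"
  have "real (rep_cov_radius_eps q \<epsilon> n) / real n \<le> 1 - 1 / real q" for n
  proof -
    have "real (rep_cov_radius_eps q \<epsilon> n) \<le> real n * (1 - 1 / real q)"
      using rep_cov_radius_eps_le[OF assms(1,2), of n] rep_cov_radius_le[OF assms(1), of n]
      by (simp add: algebra_simps)
    then show ?thesis
      using assms(1) by (cases "n = 0") (simp_all add: divide_le_eq mult.commute)
  qed
  then show "\<forall>\<^sub>F n in sequentially. real (rep_cov_radius_eps q \<epsilon> n) / real n < c"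
    using c by (intro always_eventually allI) (rule le_less_trans)
next
  fix c assume c: "c < 1 - 1 / real q"
  define \<delta> where "\<delta> = (1 - 1 / real q - c) / 2"
  have \<delta>: "\<delta> > 0"
    using c unfolding \<delta>_def by simp
  have "(\<lambda>n. 1 / \<delta>\<^sup>2 / real n) \<longlonglongrightarrow> 0"
    by (rule lim_const_over_n)
  then have "\<forall>\<^sub>F n in sequentially. 1 / \<delta>\<^sup>2 / real n < 1 - \<epsilon>"
    using assms(3) by (intro order_tendstoD(2)) auto
  then show "\<forall>\<^sub>F n in sequentially. c < real (rep_cov_radius_eps q \<epsilon> n) / real n"
    using eventually_gt_at_top[of 0]
  proof eventually_elim
    case (elim n)
    then have "real n - real n / q - \<delta> * real n \<le> real (rep_cov_radius_eps q \<epsilon> n)"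
      using \<delta> assms by (intro rep_cov_radius_eps_ge) (simp_all add: field_simps)
    moreover have "c < 1 - 1 / real q - \<delta>"
      using c unfolding \<delta>_def by (simp add: field_simps)
    then have "c * real n < (1 - 1 / real q - \<delta>) * real n"
      using elim(2) by (intro mult_strict_right_mono) auto
    then have "c * real n < real n - real n / q - \<delta> * real n"
      by (simp add: algebra_simps)
    ultimately show ?case
      using elim by (simp add: field_simps)
  qed
qed

theorem proposition17:
  fixes q :: nat
  assumes "q \<ge> 2"
  shows "((\<lambda>\<epsilon>. shift_cov_radius_eps (rep_system q) (full_shift q) (unif_bernoulli_marginal q) \<epsilon>)
            \<longlongrightarrow> ereal (1 - 1 / real q)) (at_right 0)
         \<and> shift_cov_radius (rep_system q) (full_shift q) = ereal (1 - 1 / real q)"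
proof
  have q: "q > 0"
    using assms by simp
  have "shift_cov_radius_eps (rep_system q) (full_shift q) (unif_bernoulli_marginal q) \<epsilon> = ereal (1 - 1 / real q)"
    if "0 < \<epsilon>" "\<epsilon> < 1" for \<epsilon>
    unfolding shift_cov_radius_eps_def using rep_cov_radius_eps_ratio_tendsto[OF q] that
    by (intro lim_imp_Liminf) auto
  then have "\<forall>\<^sub>F \<epsilon> in at_right 0.
      shift_cov_radius_eps (rep_system q) (full_shift q) (unif_bernoulli_marginal q) \<epsilon> = ereal (1 - 1 / real q)"
    unfolding eventually_at_right_field by (intro exI[of _ 1]) auto
  then show "((\<lambda>\<epsilon>. shift_cov_radius_eps (rep_system q) (full_shift q) (unif_bernoulli_marginal q) \<epsilon>)
               \<longlongrightarrow> ereal (1 - 1 / real q)) (at_right 0)"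
    by (rule tendsto_eventually)
  show "shift_cov_radius (rep_system q) (full_shift q) = ereal (1 - 1 / real q)"
    unfolding shift_cov_radius_def using rep_cov_radius_ratio_tendsto[OF q]
    by (intro lim_imp_Liminf) auto
qed

end
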